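(* Let $\boldsymbol{X}\in\mathbb{R}^{n\times d}$ have rows $\boldsymbol{x}_i$ with $\lVert\boldsymbol{x}_i\rVert_2\le\gamma$ for all $i$, let $\boldsymbol{W}_Q,\boldsymbol{W}_K\in\mathbb{R}^{d\times d_k}$, $\tau>0$, and define $\boldsymbol{P}_{ij}=-\lVert\boldsymbol{x}_i^T\boldsymbol{W}_Q-\boldsymbol{x}_j^T\boldsymbol{W}_K\rVert_2^2/\tau$ and $\boldsymbol{A}=\mathrm{softmax}(\boldsymbol{P})$. Then $\alpha:=\max_{i,j}\lvert\boldsymbol{P}_{ij}\rvert\le(\lVert\boldsymbol{W}_K\rVert_2+\lVert\boldsymbol{W}_Q\rVert_2)^2\gamma^2/\tau$, and consequently for every $\boldsymbol{W}_V\in\mathbb{R}^{d\times d}$, $$\lVert\mathrm{HC}[\boldsymbol{A}\boldsymbol{X}\boldsymbol{W}_V]\rVert_F\le\sqrt{\frac{ne^{2\alpha}}{e^{2\alpha}+n-1}}\,\lVert\boldsymbol{W}_V\rVert_2\lVert\mathrm{HC}[\boldsymbol{X}]\rVert_F .$$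
   Context: $\mathrm{softmax}$ is applied row-wise: $\mathrm{softmax}(\boldsymbol{P})_{ij}=e^{\boldsymbol{P}_{ij}}/\sum_t e^{\boldsymbol{P}_{it}}$. $\mathrm{HC}[\boldsymbol{X}]=(\boldsymbol{I}-\frac1n\boldsymbol{1}\boldsymbol{1}^T)\boldsymbol{X}$ with $\boldsymbol{1}$ the all-ones vector. $\lVert\cdot\rVert_F$ Frobenius norm, $\lVert\cdot\rVert_2$ spectral norm. *)

theory Defs
  imports "HOL-Analysis.Analysis"
begin

definition softmax :: "real^'n^'m \<Rightarrow> real^'n^'m" where
  "softmax P = (\<chi> i j. exp (P$i$j) / (\<Sum>t\<in>UNIV. exp (P$i$t)))"

definition HC :: "real^'d^'n \<Rightarrow> real^'d^'n" where
  "HC X = (\<chi> i j. X$i$j - (\<Sum>k\<in>UNIV. X$k$j) / real CARD('n))"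

definition spec_norm :: "real^'c^'r \<Rightarrow> real" where
  "spec_norm M = onorm (\<lambda>v. M *v v)"

definition frob_norm :: "real^'c^'r \<Rightarrow> real" where
  "frob_norm M = sqrt (\<Sum>i\<in>UNIV. \<Sum>j\<in>UNIV. (M$i$j)^2)"

definition logits :: "real^'d^'n \<Rightarrow> real^'k^'d \<Rightarrow> real^'k^'d \<Rightarrow> real \<Rightarrow> real^'n^'n" where
  "logits X WQ WK \<tau> = (\<chi> i j. - ((norm ((X$i) v* WQ - (X$j) v* WK))^2) / \<tau>)"

end

theory Submission
  imports Defs
begin

text \<open>The logit bound is the triangle inequality
  \<open>\<parallel>x\<^sub>i W\<^sub>Q - x\<^sub>j W\<^sub>K\<parallel> \<le> (\<parallel>W\<^sub>Q\<parallel>\<^sub>2 + \<parallel>W\<^sub>K\<parallel>\<^sub>2) \<gamma>\<close>. When all logits of a row lie in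
  \<open>[-\<alpha>, \<alpha>]\<close>, each softmax entry is at most \<open>exp(2\<alpha>) / (exp(2\<alpha>) + n - 1)\<close>, so \<open>A\<close> is
  row-stochastic with column sums at most \<open>c = n exp(2\<alpha>) / (exp(2\<alpha>) + n - 1)\<close>.
  Row-stochasticity gives \<open>HC[A X W\<^sub>V] = HC[A HC[X]] W\<^sub>V\<close>; centering does not increase the
  Frobenius norm, \<open>W\<^sub>V\<close> costs a factor \<open>\<parallel>W\<^sub>V\<parallel>\<^sub>2\<close>, and convexity of the squared norm
  bounds each row, \<open>\<parallel>(A Y)\<^sub>i\<parallel>\<^sup>2 \<le> \<Sum>\<^sub>k A\<^sub>i\<^sub>k \<parallel>Y\<^sub>k\<parallel>\<^sup>2\<close>, whence \<open>\<parallel>A Y\<parallel>\<^sub>F\<^sup>2 \<le> c \<parallel>Y\<parallel>\<^sub>F\<^sup>2\<close>.\<close>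

lemma spec_norm_nonneg: "0 \<le> spec_norm M"
  unfolding spec_norm_def by (rule onorm_pos_le) simp

lemma norm_vector_matrix_mult_le:
  fixes v :: "real^'r" and M :: "real^'c^'r"
  shows "norm (v v* M) \<le> spec_norm M * norm v"
proof -
  let ?w = "v v* M"
  have "norm ?w ^ 2 = v \<bullet> (M *v ?w)"
    by (simp add: power2_norm_eq_inner dot_lmul_matrix)
  also have "\<dots> \<le> norm v * norm (M *v ?w)" by (rule norm_cauchy_schwarz)
  also have "\<dots> \<le> norm v * (spec_norm M * norm ?w)"
    unfolding spec_norm_def by (intro mult_left_mono onorm) simp_all
  finally have "norm ?w * norm ?w \<le> (spec_norm M * norm v) * norm ?w"
    by (simp add: power2_eq_square algebra_simps)
  then show ?thesis
    using spec_norm_nonneg[of M] by (cases "norm ?w = 0") (simp_all add: mult_le_cancel_right)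
qed

lemma frob_norm_eq_sqrt_rows: "frob_norm M = sqrt (\<Sum>i\<in>UNIV. norm (M$i)^2)"
proof -
  have "norm (M$i)^2 = (\<Sum>j\<in>UNIV. (M$i$j)^2)" for i
    by (simp only: power2_norm_eq_inner) (simp add: inner_vec_def power2_eq_square)
  then show ?thesis unfolding frob_norm_def by simp
qed

lemma matrix_mult_row: "(A ** B)$i = (A$i) v* B"
  by (simp add: vec_eq_iff matrix_matrix_mult_def vector_matrix_mult_def mult.commute)

lemma matrix_mult_row_scaleR: "(A ** B)$i = (\<Sum>k\<in>UNIV. A$i$k *\<^sub>R B$k)"
  by (simp add: vec_eq_iff matrix_matrix_mult_def sum_component)

lemma frob_norm_matrix_mult_le: "frob_norm (M ** W) \<le> spec_norm W * frob_norm M"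
proof -
  have "(\<Sum>i\<in>UNIV. norm ((M ** W)$i)^2) \<le> (\<Sum>i\<in>UNIV. (spec_norm W)^2 * norm (M$i)^2)"
  proof (rule sum_mono)
    fix i
    have "norm ((M$i) v* W)^2 \<le> (spec_norm W * norm (M$i))^2"
      by (rule power_mono[OF norm_vector_matrix_mult_le]) simp
    then show "norm ((M ** W)$i)^2 \<le> (spec_norm W)^2 * norm (M$i)^2"
      by (simp add: matrix_mult_row power_mult_distrib)
  qed
  then have "frob_norm (M ** W) \<le> sqrt ((spec_norm W)^2 * (\<Sum>i\<in>UNIV. norm (M$i)^2))"
    unfolding frob_norm_eq_sqrt_rows by (simp add: sum_distrib_left real_sqrt_le_mono)
  then show ?thesis
    by (simp add: real_sqrt_mult frob_norm_eq_sqrt_rows spec_norm_nonneg)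
qed

lemma HC_add_row_const:
  fixes Z Z' :: "real^'d^'n"
  assumes "\<And>i j. Z$i$j = Z'$i$j + c$j"
  shows "HC Z = HC Z'"
proof -
  have "(\<Sum>k\<in>UNIV. Z$k$j) = (\<Sum>k\<in>UNIV. Z'$k$j) + real CARD('n) * c$j" for j
    by (simp add: assms sum.distrib)
  then show ?thesis unfolding HC_def
    by (simp add: vec_eq_iff assms add_divide_distrib)
qed

lemma HC_matrix_mult: "HC (Z ** W) = HC Z ** W"
proof -
  have "(\<Sum>k\<in>UNIV. \<Sum>l\<in>UNIV. Z$k$l * W$l$j) = (\<Sum>l\<in>UNIV. (\<Sum>k\<in>UNIV. Z$k$l) * W$l$j)" for j
    by (subst sum.swap) (simp add: sum_distrib_right)
  then show ?thesis
    by (simp add: HC_def vec_eq_iff matrix_matrix_mult_def left_diff_distrib sum_subtractf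
        sum_divide_distrib[symmetric])
qed

lemma HC_stochastic_mult:
  fixes A :: "real^'n^'m" and X :: "real^'d^'n"
  assumes "\<And>i. (\<Sum>k\<in>UNIV. A$i$k) = 1"
  shows "HC (A ** X) = HC (A ** HC X)"
proof (rule HC_add_row_const)
  let ?\<mu> = "\<chi> l. (\<Sum>k\<in>UNIV. X$k$l) / real CARD('n)"
  fix i l
  have "(A ** X)$i$l = (\<Sum>k\<in>UNIV. A$i$k * ((HC X)$k$l + ?\<mu>$l))"
    by (simp add: matrix_matrix_mult_def HC_def)
  also have "\<dots> = (\<Sum>k\<in>UNIV. A$i$k * (HC X)$k$l + A$i$k * ?\<mu>$l)"
    by (simp only: distrib_left)
  also have "\<dots> = (\<Sum>k\<in>UNIV. A$i$k * (HC X)$k$l) + (\<Sum>k\<in>UNIV. A$i$k) * ?\<mu>$l"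
    by (simp only: sum.distrib sum_distrib_right)
  finally show "(A ** X)$i$l = (A ** HC X)$i$l + ?\<mu>$l"
    using assms by (simp add: matrix_matrix_mult_def)
qed

lemma sum_sq_centered_le:
  fixes f :: "'a \<Rightarrow> real"
  assumes "finite I" "I \<noteq> {}"
  shows "(\<Sum>i\<in>I. (f i - sum f I / real (card I))^2) \<le> (\<Sum>i\<in>I. (f i)^2)"
proof -
  let ?m = "sum f I / real (card I)"
  have card: "real (card I) > 0" using assms by (simp add: card_gt_0_iff)
  have "(\<Sum>i\<in>I. (f i - ?m)^2) = (\<Sum>i\<in>I. (f i)^2 - (2 * ?m) * f i + ?m^2)"
    by (simp add: power2_diff algebra_simps)
  also have "\<dots> = (\<Sum>i\<in>I. (f i)^2) - 2 * ?m * sum f I + real (card I) * ?m^2"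
    by (simp add: sum.distrib sum_subtractf sum_distrib_left)
  also have "2 * ?m * sum f I = 2 * real (card I) * ?m^2"
    using card by (simp add: power2_eq_square)
  finally show ?thesis using card by (simp add: zero_le_mult_iff)
qed

lemma frob_norm_HC_le: "frob_norm (HC (Z :: real^'d^'n)) \<le> frob_norm Z"
proof -
  have "(\<Sum>j\<in>UNIV. \<Sum>i\<in>UNIV. ((HC Z)$i$j)^2) \<le> (\<Sum>j\<in>UNIV. \<Sum>i\<in>UNIV. (Z$i$j)^2)"
    by (rule sum_mono) (use sum_sq_centered_le[of "UNIV::'n set"] in \<open>simp add: HC_def\<close>)
  then show ?thesis
    unfolding frob_norm_def by (subst (1 2) sum.swap) (rule real_sqrt_le_mono)
qed

lemma weighted_mean_sq_le:
  fixes a t :: "'a \<Rightarrow> real"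
  assumes "finite I" "\<And>k. k\<in>I \<Longrightarrow> a k \<ge> 0" "sum a I = 1"
  shows "(\<Sum>k\<in>I. a k * t k)^2 \<le> (\<Sum>k\<in>I. a k * (t k)^2)"
proof -
  let ?m = "\<Sum>k\<in>I. a k * t k"
  have "0 \<le> (\<Sum>k\<in>I. a k * (t k - ?m)^2)" using assms by (intro sum_nonneg) simp
  also have "\<dots> = (\<Sum>k\<in>I. a k * (t k)^2) - 2 * ?m * ?m + ?m^2 * sum a I"
    by (simp add: power2_diff algebra_simps sum.distrib sum_subtractf sum_distrib_left sum_distrib_right)
  finally show ?thesis using assms by (simp add: power2_eq_square)
qed

lemma norm_convex_comb_sq_le:
  fixes y :: "'a \<Rightarrow> 'b::real_normed_vector"
  assumes "finite I" "\<And>k. k\<in>I \<Longrightarrow> a k \<ge> 0" "sum a I = 1"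
  shows "norm (\<Sum>k\<in>I. a k *\<^sub>R y k)^2 \<le> (\<Sum>k\<in>I. a k * norm (y k)^2)"
proof -
  have "norm (\<Sum>k\<in>I. a k *\<^sub>R y k) \<le> (\<Sum>k\<in>I. norm (a k *\<^sub>R y k))"
    by (rule norm_sum)
  also have "\<dots> = (\<Sum>k\<in>I. a k * norm (y k))"
    using assms(2) by (intro sum.cong) auto
  finally have "norm (\<Sum>k\<in>I. a k *\<^sub>R y k)^2 \<le> (\<Sum>k\<in>I. a k * norm (y k))^2"
    by (intro power_mono) auto
  also have "\<dots> \<le> (\<Sum>k\<in>I. a k * norm (y k)^2)" by (rule weighted_mean_sq_le[OF assms])
  finally show ?thesis .
qed

lemma frob_norm_stochastic_mult_le:
  fixes A :: "real^'n^'m" and Y :: "real^'d^'n"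
  assumes nonneg: "\<And>i k. A$i$k \<ge> 0"
    and row_sum: "\<And>i. (\<Sum>k\<in>UNIV. A$i$k) = 1"
    and col_sum: "\<And>k. (\<Sum>i\<in>UNIV. A$i$k) \<le> c"
  shows "frob_norm (A ** Y) \<le> sqrt c * frob_norm Y"
proof -
  have "(\<Sum>i\<in>UNIV. norm ((A ** Y)$i)^2) \<le> (\<Sum>i\<in>UNIV. \<Sum>k\<in>UNIV. A$i$k * norm (Y$k)^2)"
    unfolding matrix_mult_row_scaleR
    by (intro sum_mono norm_convex_comb_sq_le) (simp_all add: nonneg row_sum)
  also have "\<dots> = (\<Sum>k\<in>UNIV. (\<Sum>i\<in>UNIV. A$i$k) * norm (Y$k)^2)"
    by (subst sum.swap) (simp add: sum_distrib_right)
  also have "\<dots> \<le> (\<Sum>k\<in>UNIV. c * norm (Y$k)^2)"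
    by (intro sum_mono mult_right_mono col_sum) simp
  finally show ?thesis
    unfolding frob_norm_eq_sqrt_rows
    by (metis real_sqrt_le_mono real_sqrt_mult sum_distrib_left)
qed

lemma frob_norm_HC_stochastic_mult_le:
  fixes A :: "real^'n^'m" and X :: "real^'d^'n" and W :: "real^'e^'d"
  assumes nonneg: "\<And>i k. A$i$k \<ge> 0"
    and row_sum: "\<And>i. (\<Sum>k\<in>UNIV. A$i$k) = 1"
    and col_sum: "\<And>k. (\<Sum>i\<in>UNIV. A$i$k) \<le> c"
  shows "frob_norm (HC (A ** X ** W)) \<le> sqrt c * spec_norm W * frob_norm (HC X)"
proof -
  have "HC (A ** X) = HC (A ** HC X)"
    by (rule HC_stochastic_mult[OF row_sum])
  then have "frob_norm (HC (A ** X ** W)) = frob_norm (HC (A ** HC X ** W))"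
    by (simp only: HC_matrix_mult)
  also have "\<dots> \<le> frob_norm (A ** HC X ** W)"
    by (rule frob_norm_HC_le)
  also have "\<dots> \<le> spec_norm W * frob_norm (A ** HC X)"
    by (rule frob_norm_matrix_mult_le)
  also have "\<dots> \<le> spec_norm W * (sqrt c * frob_norm (HC X))"
    by (intro mult_left_mono spec_norm_nonneg frob_norm_stochastic_mult_le nonneg row_sum col_sum)
  finally show ?thesis by (simp only: mult_ac)
qed

lemma abs_logits_le:
  fixes X :: "real^'d^'n" and WQ WK :: "real^'k^'d"
  assumes rows: "\<And>i. norm (X$i) \<le> \<gamma>" and tau: "\<tau> > 0"
  shows "\<bar>logits X WQ WK \<tau> $ i $ j\<bar> \<le> (spec_norm WK + spec_norm WQ)^2 * \<gamma>^2 / \<tau>"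
proof -
  have "norm ((X$i) v* WQ - (X$j) v* WK) \<le> norm ((X$i) v* WQ) + norm ((X$j) v* WK)"
    by (rule norm_triangle_ineq4)
  also have "\<dots> \<le> spec_norm WQ * \<gamma> + spec_norm WK * \<gamma>"
    using norm_vector_matrix_mult_le[of "X$i" WQ] norm_vector_matrix_mult_le[of "X$j" WK]
      rows[of i] rows[of j] spec_norm_nonneg[of WQ] spec_norm_nonneg[of WK]
    by (meson add_mono mult_left_mono order_trans)
  finally have "(norm ((X$i) v* WQ - (X$j) v* WK))^2 \<le> ((spec_norm WK + spec_norm WQ) * \<gamma>)^2"
    by (intro power_mono) (simp_all add: algebra_simps)
  then show ?thesis
    using tau unfolding logits_def by (simp add: divide_right_mono power_mult_distrib)
qed

lemma softmax_nonneg: "softmax P $ i $ k \<ge> 0"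
  unfolding softmax_def by (simp add: sum_nonneg)

lemma softmax_row_sum: "(\<Sum>k\<in>UNIV. softmax P $ i $ k) = 1"
proof -
  have "(\<Sum>t\<in>UNIV. exp (P$i$t)) > 0" by (rule sum_pos) auto
  then show ?thesis unfolding softmax_def by (simp add: sum_divide_distrib[symmetric])
qed

lemma softmax_le:
  fixes P :: "real^'n^'m"
  assumes bound: "\<And>t. \<bar>P$i$t\<bar> \<le> \<alpha>"
  shows "softmax P $ i $ k \<le> exp (2*\<alpha>) / (exp (2*\<alpha>) + real CARD('n) - 1)"
proof -
  let ?u = "exp (P$i$k)" and ?v = "exp \<alpha>" and ?b = "(real CARD('n) - 1) * exp (-\<alpha>)"
  have "-\<alpha> \<le> P$i$t" for t
    using bound[of t] by (simp add: abs_le_iff)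
  then have "real (card (UNIV - {k})) * exp (-\<alpha>) \<le> (\<Sum>t\<in>UNIV-{k}. exp (P$i$t))"
    by (intro sum_bounded_below) simp
  moreover have "real (card (UNIV - {k})) = real CARD('n) - 1"
    by (simp add: card_Diff_singleton of_nat_diff Suc_leI)
  ultimately have S: "?u + ?b \<le> (\<Sum>t\<in>UNIV. exp (P$i$t))"
    by (simp add: sum.remove[of UNIV k])
  have b0: "0 \<le> ?b" by (simp add: Suc_leI)
  have uv: "?u \<le> ?v" using bound[of k] by (simp add: abs_le_iff)
  have "softmax P $ i $ k \<le> ?u / (?u + ?b)"
    unfolding softmax_def using S b0 by (simp add: frac_le add_pos_nonneg)
  also have "\<dots> \<le> ?v / (?v + ?b)"
  proof -
    have "?u * (?v + ?b) \<le> ?v * (?u + ?b)"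
      using mult_right_mono[OF uv b0] by (simp add: algebra_simps)
    moreover have "0 < ?u + ?b" "0 < ?v + ?b"
      using b0 by (simp_all add: add_pos_nonneg)
    ultimately show ?thesis by (simp add: field_simps)
  qed
  also have "\<dots> = exp (2*\<alpha>) / (exp (2*\<alpha>) + real CARD('n) - 1)"
    by (simp add: field_simps exp_minus mult_exp_exp)
  finally show ?thesis .
qed

lemma softmax_column_sum_le:
  fixes P :: "real^'n^'n"
  assumes "\<And>i t. \<bar>P$i$t\<bar> \<le> \<alpha>"
  defines "n \<equiv> real CARD('n)"
  shows "(\<Sum>i\<in>UNIV. softmax P $ i $ k) \<le> n * exp (2*\<alpha>) / (exp (2*\<alpha>) + n - 1)"
  using sum_bounded_above[of UNIV "\<lambda>i. softmax P $ i $ k", OF softmax_le[OF assms(1)]]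
  by (simp add: n_def)

theorem mainTheorem9:
  fixes X :: "real^'d^'n" and WQ WK :: "real^'k^'d" and \<gamma> \<tau> :: real
  assumes rows: "\<forall>i. norm (X$i) \<le> \<gamma>"
    and tau: "\<tau> > 0"
  shows "let P = logits X WQ WK \<tau>; A = softmax P;
             \<alpha> = Max {\<bar>P$i$j\<bar> | i j. True};
             n = real CARD('n)
         in \<alpha> \<le> (spec_norm WK + spec_norm WQ)^2 * \<gamma>^2 / \<tau>
          \<and> (\<forall>WV :: real^'d^'d.
               frob_norm (HC (A ** X ** WV))
                 \<le> sqrt (n * exp (2*\<alpha>) / (exp (2*\<alpha>) + n - 1)) * spec_norm WV * frob_norm (HC X))"
proof -
  define P where "P = logits X WQ WK \<tau>"
  define A where "A = softmax P"
  define \<alpha> where "\<alpha> = Max {\<bar>P$i$j\<bar> | i j. True}"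
  define c where "c = real CARD('n) * exp (2*\<alpha>) / (exp (2*\<alpha>) + real CARD('n) - 1)"
  have fin: "finite {\<bar>P$i$j\<bar> | i j. True}"
    using finite_image_set2[of "\<lambda>_. True" "\<lambda>_. True" "\<lambda>i j. \<bar>P$i$j\<bar>"] by simp
  have P_le: "\<bar>P$i$j\<bar> \<le> \<alpha>" for i j
    unfolding \<alpha>_def by (rule Max_ge[OF fin]) blast
  have "\<alpha> \<le> (spec_norm WK + spec_norm WQ)^2 * \<gamma>^2 / \<tau>"
    unfolding \<alpha>_def
    by (rule Max.boundedI[OF fin]) (auto simp: P_def intro: abs_logits_le[OF rows[rule_format] tau])
  moreover have "frob_norm (HC (A ** X ** WV)) \<le> sqrt c * spec_norm WV * frob_norm (HC X)" for WV
    unfolding A_def c_def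
    by (intro frob_norm_HC_stochastic_mult_le softmax_nonneg softmax_row_sum
        softmax_column_sum_le P_le)
  ultimately show ?thesis
    unfolding Let_def P_def[symmetric] A_def[symmetric] \<alpha>_def[symmetric] c_def by blast
qed

end
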